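(* For any values of $k$ and $\mu$, \[ \,_{2}\tilde{F}_{3}\left(\tfrac{1}{2},\tfrac{1}{2};1,1-\mu,\mu+1;-k^{2}\right)=\sum_{L=0}^{\infty}\frac{(-1)^{2L}k^{4L}\Gamma(2L+1)^{2}2^{-8L}\left(2-\delta_{L0}\right)}{(L!)^{2}} \,_{1}\tilde{F}_{2}\left(L+\tfrac{1}{2};2L+1,L+\mu+1;-\tfrac{k^{2}}{4}\right)\,_{1}\tilde{F}_{2}\left(L+\tfrac{1}{2};2L+1,L-\mu+1;-\tfrac{k^{2}}{4}\right). \]
   Context: $\,_{p}F_{q}(a_1,\dots,a_p;b_1,\dots,b_q;z)=\sum_{n\ge0}\frac{(a_1)_n\cdots(a_p)_n}{(b_1)_n\cdots(b_q)_n}\frac{z^n}{n!}$ is the generalized hypergeometric function, with $(c)_n=\Gamma(c+n)/\Gamma(c)$. The regularized hypergeometric function is $\,_{p}\tilde{F}_{q}(a_1,\dots,a_p;b_1,\dots,b_q;z)=\,_{p}F_{q}(a_1,\dots,a_p;b_1,\dots,b_q;z)/(\Gamma(b_1)\cdots\Gamma(b_q))$ (understood by continuity, as an entire function of the $b_j$, when some $b_j$ is a nonpositive integer). $\delta_{L0}$ is the Kronecker delta. *)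

theory Defs
  imports "HOL-Analysis.Analysis" "HOL-Analysis.Gamma_Function"
begin

text \<open>Since (b)_n * Gamma(b) = Gamma(b+n), we have 1/((b)_n Gamma(b)) = 1/Gamma(b+n),
  and using the entire reciprocal Gamma function rGamma this is the continuous
  (entire in b) extension, valid also for b a nonpositive integer.\<close>
definition hyper_reg :: "complex list \<Rightarrow> complex list \<Rightarrow> complex \<Rightarrow> complex" where
  "hyper_reg as bs z =
     (\<Sum>n. (\<Prod>a\<leftarrow>as. pochhammer a n) * (\<Prod>b\<leftarrow>bs. rGamma (b + of_nat n))
           * z ^ n / fact n)"

end

theory Submission
  imports Defs
begin

text \<open>With w = -k^2/16, both sides are sums of the absolutely convergent triple series
  over (L, p, q) of (2 - delta_L0) (2p choose p+L) (2q choose q+L) b_mu(p) b_(-mu)(q), where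
  b_nu(p) = w^p / (p! Gamma(p + nu + 1)).
  For fixed L the (p, q)-series factors, and the shift p = L + m identifies each factor with
  (2L)!/L! w^L 1F2~(L+1/2; 2L+1, L +- mu + 1; 4w).
  For fixed (p, q) only L <= min(p, q) contributes, and a folded Vandermonde identity sums the
  weights to (2p+2q choose p+q).  Grouping by N = p + q, the Chu-Vandermonde identity for
  reciprocal Gamma values turns the N-th group into the N-th term of
  2F3~(1/2, 1/2; 1, 1 - mu, 1 + mu; 16w).\<close>

(* Split Vandermonde's sum over k at k = p: the terms k = p + L and k = p - L (L >= 1) agree. *)
lemma vandermonde_symmetric_fold:
  fixes p q :: nat
  shows "(\<Sum>L\<le>p+q. (if L = 0 then 1 else 2) * ((2*p) choose (p+L)) * ((2*q) choose (q+L)))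
         = (2*p+2*q) choose (p+q)"
proof -
  define t where "t L = ((2*p) choose (p+L)) * ((2*q) choose (q+L))" for L
  define h where "h k = ((2*p) choose k) * ((2*q) choose (p+q-k))" for k
  have t_zero: "t L = 0" if "L > p \<or> L > q" for L
    using that unfolding t_def by auto
  have upper: "(\<Sum>k\<in>{p..p+q}. h k) = (\<Sum>L\<le>p+q. t L)"
  proof -
    have "(\<Sum>k\<in>{p..p+q}. h k) = (\<Sum>L\<le>q. h (p+L))"
      by (rule sum.reindex_bij_witness[of _ "\<lambda>L. p+L" "\<lambda>k. k-p"]) auto
    also have "\<dots> = (\<Sum>L\<le>q. t L)"
      by (intro sum.cong refl) (auto simp: h_def t_def binomial_symmetric[of "q-_" "2*q"])
    also have "\<dots> = (\<Sum>L\<le>p+q. t L)"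
      by (rule sum.mono_neutral_left) (auto simp: t_zero)
    finally show ?thesis .
  qed
  have lower: "(\<Sum>k<p. h k) = (\<Sum>L\<in>{1..p+q}. t L)"
  proof -
    have "(\<Sum>k<p. h k) = (\<Sum>L\<in>{1..p}. h (p-L))"
      by (rule sum.reindex_bij_witness[of _ "\<lambda>k. p-k" "\<lambda>L. p-L"]) auto
    also have "\<dots> = (\<Sum>L\<in>{1..p}. t L)"
    proof (intro sum.cong refl)
      fix L assume "L \<in> {1..p}"
      then have "(2*p) choose (p-L) = (2*p) choose (p+L)" and "p+q-(p-L) = q+L"
        using binomial_symmetric[of "p-L" "2*p"] by auto
      then show "h (p-L) = t L" unfolding h_def t_def by simp
    qed
    also have "\<dots> = (\<Sum>L\<in>{1..p+q}. t L)"
      by (rule sum.mono_neutral_left) (auto simp: t_zero)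
    finally show ?thesis .
  qed
  have atMost_split: "{..p+q} = insert 0 {1..p+q}" by auto
  have "(\<Sum>L\<le>p+q. (if L = 0 then 1 else 2) * t L)
        = (\<Sum>L\<le>p+q. t L) + (\<Sum>L\<in>{1..p+q}. t L)"
    unfolding atMost_split by (simp add: mult_2 sum.distrib)
  also have "\<dots> = (\<Sum>k\<le>p+q. h k)"
    unfolding upper[symmetric] lower[symmetric]
    by (subst sum.union_disjoint[symmetric]) (auto intro!: sum.cong)
  also have "\<dots> = (2*p+2*q) choose (p+q)"
    unfolding h_def by (rule vandermonde)
  finally show ?thesis by (simp add: t_def mult.assoc)
qed

lemma has_sum_vandermonde_fold:
  fixes x y :: "'a :: real_normed_field"
  shows "((\<lambda>L. (if L = 0 then 1 else 2) * (of_nat ((2*p) choose (p+L)) * x)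
                 * (of_nat ((2*q) choose (q+L)) * y))
          has_sum of_nat ((2*p+2*q) choose (p+q)) * x * y) UNIV"
proof (rule has_sum_finite_neutralI[where B = "{..p+q}"])
  have "(if L = 0 then 1 else 2) * (of_nat ((2*p) choose (p+L)) * x) * (of_nat ((2*q) choose (q+L)) * y)
        = of_nat ((if L = 0 then 1 else 2) * ((2*p) choose (p+L)) * ((2*q) choose (q+L))) * x * y"
    for L by (cases "L = 0") (simp_all add: mult_ac)
  then have "(\<Sum>L\<le>p+q. (if L = 0 then 1 else 2) * (of_nat ((2*p) choose (p+L)) * x)
                    * (of_nat ((2*q) choose (q+L)) * y))
        = of_nat (\<Sum>L\<le>p+q. (if L = 0 then 1 else 2) * ((2*p) choose (p+L)) * ((2*q) choose (q+L)))
          * x * y"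
    by (simp only: of_nat_sum sum_distrib_right)
  then show "of_nat ((2*p+2*q) choose (p+q)) * x * y
             = (\<Sum>L\<le>p+q. (if L = 0 then 1 else 2) * (of_nat ((2*p) choose (p+L)) * x)
                 * (of_nat ((2*q) choose (q+L)) * y))"
    by (simp only: vandermonde_symmetric_fold)
qed auto

lemma choose_double_le_four_pow: "real ((2*n) choose k) \<le> 4^n"
proof -
  have "real ((2*n) choose k) \<le> real (4^n)"
    unfolding of_nat_le_iff using binomial_le_pow2[of "2*n" k] by (simp add: power_mult)
  then show ?thesis
    by simp
qed

lemma rGamma_of_nat_plus_1: "rGamma (of_nat n + 1 :: 'a :: Gamma) = inverse (fact n)"
  using Gamma_fact[of n, where 'a='a] by (simp add: rGamma_inverse_Gamma add.commute)

lemma rGamma_eq_pochhammer_minus: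
  fixes c :: "'a :: Gamma"
  assumes "p \<le> N"
  shows "rGamma (of_nat p + 1 + c)
         = (-1)^(N-p) * pochhammer (- (of_nat N + c)) (N-p) * rGamma (of_nat N + 1 + c)"
proof -
  have shift: "of_nat p + 1 + c + of_nat (N-p) = of_nat N + 1 + c"
    and base: "(of_nat N + c) - of_nat (N-p) + 1 = of_nat p + 1 + c"
    using assms by (simp_all add: of_nat_diff)
  have "rGamma (of_nat p + 1 + c) = pochhammer (of_nat p + 1 + c) (N-p) * rGamma (of_nat N + 1 + c)"
    using pochhammer_rGamma[of "of_nat p + 1 + c" "N-p"] unfolding shift .
  also have "pochhammer (of_nat p + 1 + c) (N-p) = (-1)^(N-p) * pochhammer (- (of_nat N + c)) (N-p)"
    using pochhammer_minus'[of "of_nat N + c" "N-p"] unfolding base by simp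
  finally show ?thesis .
qed

(* Chu-Vandermonde: by rGamma_eq_pochhammer_minus every summand is a term of
   pochhammer_binomial_sum for the arguments -(N + b) and -(N + a). *)
lemma sum_rGamma_convolution:
  fixes a b :: "'a :: Gamma"
  shows "(\<Sum>p\<le>N. rGamma (of_nat p + 1 + a) * rGamma (of_nat (N-p) + 1 + b)
                   / (fact p * fact (N-p)))
         = pochhammer (of_nat N + 1 + a + b) N / fact N
           * rGamma (of_nat N + 1 + a) * rGamma (of_nat N + 1 + b)"
proof -
  define R where "R = rGamma (of_nat N + 1 + a) * rGamma (of_nat N + 1 + b)"
  define a' where "a' = - (of_nat N + b)"
  define b' where "b' = - (of_nat N + a)"
  have "(\<Sum>p\<le>N. rGamma (of_nat p + 1 + a) * rGamma (of_nat (N-p) + 1 + b) / (fact p * fact (N-p)))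
      = (\<Sum>p\<le>N. R * (-1)^N / fact N * (of_nat (N choose p) * pochhammer a' p * pochhammer b' (N-p)))"
  proof (intro sum.cong refl)
    fix p assume "p \<in> {..N}"
    then have pN: "p \<le> N" by simp
    have signs: "(-1::'a)^(N-p) * (-1)^p = (-1)^N"
      using pN by (simp flip: power_add)
    show "rGamma (of_nat p + 1 + a) * rGamma (of_nat (N-p) + 1 + b) / (fact p * fact (N-p))
      = R * (-1)^N / fact N * (of_nat (N choose p) * pochhammer a' p * pochhammer b' (N-p))"
      using rGamma_eq_pochhammer_minus[OF pN, of a] rGamma_eq_pochhammer_minus[of "N-p" N b] pN
      unfolding R_def a'_def b'_def binomial_fact[OF pN] signs[symmetric]
      by (simp add: field_simps)
  qed
  also have "\<dots> = R * (-1)^N / fact N * pochhammer (a' + b') N"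
    by (simp add: pochhammer_binomial_sum sum_distrib_left)
  also have "pochhammer (a' + b') N = (-1)^N * pochhammer (of_nat N + 1 + a + b) N"
    using pochhammer_minus[of "of_nat (2*N) + a + b" N] unfolding a'_def b'_def
    by (simp add: algebra_simps)
  finally show ?thesis
    unfolding R_def by (simp add: field_simps flip: power_add)
qed

(* Once K >= |c| + 1, every factor of pochhammer (K + c) has modulus at least 1,
   so rGamma (n + c) is dominated by rGamma (K + c) for n >= K. *)
lemma rGamma_shifts_bounded:
  fixes c :: complex
  shows "\<exists>M. \<forall>n. norm (rGamma (of_nat n + c)) \<le> M"
proof -
  obtain K :: nat where K: "real K \<ge> norm c + 1"
    using real_arch_simple by blast
  have poch_ge_1: "norm (pochhammer (of_nat K + c) j) \<ge> 1" for j
  proof (induction j)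
    case (Suc j)
    have "real (K + j) - norm c \<le> norm (of_nat (K + j) + c)"
      using norm_diff_ineq[of "of_nat (K + j)" c] by (simp only: norm_of_nat)
    then have "1 \<le> norm (of_nat K + c + of_nat j)"
      using K by (simp add: add_ac)
    with Suc.IH show ?case
      by (simp add: pochhammer_Suc norm_mult mult_ge1_I)
  qed simp
  define M where "M = Max ((\<lambda>n. norm (rGamma (of_nat n + c))) ` {..K})"
  have below_K: "norm (rGamma (of_nat n + c)) \<le> M" if "n \<le> K" for n
    unfolding M_def using that by (intro Max_ge) auto
  have "norm (rGamma (of_nat n + c)) \<le> M" for n
  proof (cases "n \<le> K")
    case False
    then have shift: "of_nat K + c + of_nat (n-K) = of_nat n + c"
      by (simp add: of_nat_diff)
    have "norm (rGamma (of_nat K + c))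
          = norm (pochhammer (of_nat K + c) (n-K)) * norm (rGamma (of_nat n + c))"
      using pochhammer_rGamma[of "of_nat K + c" "n-K", unfolded shift] by (simp add: norm_mult)
    also have "\<dots> \<ge> norm (rGamma (of_nat n + c))"
      using poch_ge_1 by (simp add: mult_le_cancel_right1)
    finally show ?thesis
      using below_K[of K] by simp
  qed (rule below_K)
  then show ?thesis by blast
qed

lemma pochhammer_half_binomial:
  fixes L m :: nat
  shows "of_nat ((2*(L+m)) choose (2*L+m)) * fact L * fact (2*L+m) * fact m
         = (4::'a::field_char_0)^m * fact (2*L) * fact (L+m) * pochhammer (of_nat L + 1/2) m"
proof -
  have binom: "of_nat ((2*(L+m)) choose (2*L+m)) * fact (2*L+m) * fact m = (fact (2*(L+m)) :: 'a)"
  proof -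
    have "fact (2*L+m) * fact m * ((2*(L+m)) choose (2*L+m)) = fact (2*(L+m))"
      using binomial_fact_lemma[of "2*L+m" "2*(L+m)"] by simp
    then have "of_nat (fact (2*L+m) * fact m * ((2*(L+m)) choose (2*L+m))) = (of_nat (fact (2*(L+m))) :: 'a)"
      by (rule arg_cong)
    then show ?thesis
      by (simp only: of_nat_mult of_nat_fact mult_ac)
  qed
  have four: "(2::'a)^(2*n) = 4^n" for n
    unfolding power_mult by simp
  have split: "pochhammer (1/2) (L+m) = pochhammer (1/2) L * pochhammer (of_nat L + 1/2 :: 'a) m"
    using pochhammer_product'[of "1/2::'a" L m] by (simp add: add.commute)
  have "of_nat ((2*(L+m)) choose (2*L+m)) * fact L * fact (2*L+m) * fact m = fact (2*(L+m)) * (fact L :: 'a)"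
    using binom by (simp add: mult_ac)
  also have "\<dots> = 4^L * 4^m * pochhammer (1/2) L * pochhammer (of_nat L + 1/2) m * fact (L+m) * fact L"
    unfolding fact_double split four by (simp add: power_add)
  also have "\<dots> = 4^m * fact (2*L) * fact (L+m) * pochhammer (of_nat L + 1/2) m"
    unfolding fact_double four by (simp add: mult_ac)
  finally show ?thesis .
qed

lemma summable_on_product_nonneg:
  fixes f :: "'a \<Rightarrow> real" and g :: "'b \<Rightarrow> real"
  assumes "\<And>x. f x \<ge> 0" "\<And>y. g y \<ge> 0" "f summable_on A" "g summable_on B"
  shows "(\<lambda>(x,y). f x * g y) summable_on A \<times> B"
proof (rule summable_on_SigmaI[where g = "\<lambda>x. f x * infsum g B"])
  show "((\<lambda>y. (\<lambda>(x,y). f x * g y) (x, y)) has_sum f x * infsum g B) B" for x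
    using has_sum_cmult_right[OF has_sum_infsum[OF assms(4)]] by simp
  show "(\<lambda>x. f x * infsum g B) summable_on A"
    using summable_on_cmult_left[OF assms(3)] by simp
qed (use assms in simp)

lemma has_sum_product:
  fixes f g :: "'a \<Rightarrow> 'c :: real_normed_algebra"
  assumes "(\<lambda>(x,y). f x * g y) summable_on A \<times> B" "(f has_sum a) A" "(g has_sum b) B"
  shows "((\<lambda>(x,y). f x * g y) has_sum a * b) (A \<times> B)"
proof (rule has_sum_SigmaI[where g = "\<lambda>x. f x * b"])
  show "((\<lambda>y. (\<lambda>(x,y). f x * g y) (x, y)) has_sum f x * b) B" for x
    using has_sum_cmult_right[OF assms(3)] by simp
  show "((\<lambda>x. f x * b) has_sum a * b) A"
    using has_sum_cmult_left[OF assms(2)] .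
qed (use assms(1) in simp)

lemma has_sum_diagonal:
  fixes f :: "nat \<times> nat \<Rightarrow> 'a :: {topological_comm_monoid_add, t3_space}"
  assumes "(f has_sum S) UNIV"
  shows "((\<lambda>N. \<Sum>p\<le>N. f (p, N-p)) has_sum S) UNIV"
proof (rule has_sum_SigmaD)
  have "bij_betw (\<lambda>(N,p). (p, N-p)) (SIGMA N:UNIV. {..N}) (UNIV :: (nat \<times> nat) set)"
    by (rule bij_betw_byWitness[where f' = "\<lambda>(p,q). (p+q, p)"]) auto
  from has_sum_reindex_bij_betw[OF this, of f S] assms
  show "((\<lambda>(N,p). f (p, N-p)) has_sum S) (SIGMA N:UNIV. {..N})"
    by (simp add: case_prod_unfold)
qed simp

lemma exp_series_summable_on:
  fixes r :: real
  assumes "r \<ge> 0"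
  shows "(\<lambda>n. r^n / fact n) summable_on UNIV"
  using summable_exp[of r] assms
  by (subst summable_on_UNIV_nonneg_real_iff) (simp_all add: field_simps)

(* The p-th term of 0F1~(; nu + 1; w); at w = -x^2/4 the series is (x/2)^(-nu) J_nu(x). *)
definition bessel_term :: "complex \<Rightarrow> complex \<Rightarrow> nat \<Rightarrow> complex" where
  "bessel_term \<nu> w p = rGamma (of_nat p + 1 + \<nu>) * w^p / fact p"

lemma bessel_term_bound:
  obtains M where "M \<ge> 0" "\<And>p. norm (bessel_term \<nu> w p) \<le> M * norm w ^ p / fact p"
proof -
  obtain M where M: "\<And>n. norm (rGamma (of_nat n + (1 + \<nu>))) \<le> M"
    using rGamma_shifts_bounded by blast
  have "norm (bessel_term \<nu> w p) \<le> M * norm w ^ p / fact p" for p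
    using M[of p] unfolding bessel_term_def
    by (simp add: norm_mult norm_divide norm_power divide_right_mono mult_right_mono add.assoc)
  moreover have "M \<ge> 0"
    using M[of 0] norm_ge_zero order_trans by blast
  ultimately show ?thesis using that by blast
qed

lemma hyper_1F2_half_term:
  fixes \<nu> w :: complex
  shows "(\<Prod>a\<leftarrow>[of_nat L + 1/2]. pochhammer a m)
           * (\<Prod>b\<leftarrow>[of_nat (2*L) + 1, of_nat L + \<nu> + 1]. rGamma (b + of_nat m))
           * (4*w)^m / fact m
         = fact L / fact (2*L)
           * (of_nat ((2*(L+m)) choose (2*L+m)) * bessel_term \<nu> 1 (L+m) * w^m)"
proof -
  have binom: "of_nat ((2*(L+m)) choose (2*L+m))
               = 4^m * fact (2*L) * fact (L+m) * pochhammer (of_nat L + 1/2) m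
                 / (fact L * fact (2*L+m) * fact m :: complex)"
    using pochhammer_half_binomial[of L m, where 'a=complex] by (simp add: eq_divide_eq mult_ac)
  have "rGamma (of_nat (2*L) + 1 + of_nat m :: complex) = inverse (fact (2*L+m))"
    using rGamma_of_nat_plus_1[of "2*L+m"] by (simp add: add_ac)
  moreover have "rGamma (of_nat L + \<nu> + 1 + of_nat m) = rGamma (of_nat (L+m) + 1 + \<nu>)"
    by (simp add: add_ac)
  ultimately show ?thesis
    unfolding bessel_term_def binom by (simp add: field_simps power_mult_distrib)
qed

lemma summable_norm_shifted_binomial_bessel:
  fixes \<nu> w :: complex
  shows "summable (\<lambda>m. norm (of_nat ((2*(L+m)) choose (2*L+m)) * bessel_term \<nu> 1 (L+m) * w^m))"
proof -
  obtain M where "M \<ge> 0" and M: "\<And>p. norm (bessel_term \<nu> 1 p) \<le> M / fact p"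
    using bessel_term_bound[of \<nu> 1] by auto
  have bound: "norm (of_nat ((2*(L+m)) choose (2*L+m)) * bessel_term \<nu> 1 (L+m) * w^m)
               \<le> 4^L * M * ((4 * norm w)^m / fact m)" for m
  proof -
    have "real ((2*(L+m)) choose (2*L+m)) \<le> 4^L * 4^m"
      using choose_double_le_four_pow[of "L+m" "2*L+m"] by (simp add: power_add)
    moreover have "M / fact (L+m) \<le> M / fact m"
      using \<open>M \<ge> 0\<close> by (intro divide_left_mono fact_mono) auto
    ultimately have "norm (of_nat ((2*(L+m)) choose (2*L+m)) * bessel_term \<nu> 1 (L+m) * w^m)
                     \<le> (4^L * 4^m) * (M / fact m) * norm w ^ m"
      using M[of "L+m"] \<open>M \<ge> 0\<close> unfolding norm_mult norm_power norm_of_nat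
      by (intro mult_mono) auto
    then show ?thesis
      by (simp add: power_mult_distrib mult_ac)
  qed
  have "summable (\<lambda>m. 4^L * M * ((4 * norm w)^m / fact m))"
    using summable_exp[of "4 * norm w"] by (intro summable_mult) (simp add: field_simps)
  then show ?thesis
    by (rule summable_comparison_test') (use bound in simp)
qed

lemma binomial_bessel_series_has_sum:
  fixes \<nu> w :: complex
  shows "((\<lambda>p. of_nat ((2*p) choose (p+L)) * bessel_term \<nu> w p) has_sum
          fact (2*L) / fact L * w^L
          * hyper_reg [of_nat L + 1/2] [of_nat (2*L) + 1, of_nat L + \<nu> + 1] (4*w)) UNIV"
proof -
  define f where "f p = of_nat ((2*p) choose (p+L)) * bessel_term \<nu> w p" for p
  define c where "c m = of_nat ((2*(L+m)) choose (2*L+m)) * bessel_term \<nu> 1 (L+m) * w^m" for m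
  have f_shift: "f (m + L) = w^L * c m" for m
    unfolding f_def c_def bessel_term_def by (simp add: mult_2 add_ac power_add)
  have c_summable: "summable (\<lambda>m. norm (c m))"
    unfolding c_def by (rule summable_norm_shifted_binomial_bessel)
  have hyper: "hyper_reg [of_nat L + 1/2] [of_nat (2*L) + 1, of_nat L + \<nu> + 1] (4*w)
               = fact L / fact (2*L) * suminf c"
    unfolding hyper_reg_def hyper_1F2_half_term c_def[symmetric]
    by (rule suminf_mult[OF summable_norm_cancel[OF c_summable]])
  have "(\<lambda>m. f (m + L)) sums (w^L * suminf c)"
    unfolding f_shift by (rule sums_mult[OF summable_sums[OF summable_norm_cancel[OF c_summable]]])
  moreover have "f p = 0" if "p < L" for p
    using that unfolding f_def by simp
  ultimately have "f sums (w^L * suminf c)"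
    using sums_iff_shift[of f L] by simp
  moreover have "summable (\<lambda>p. norm (f p))"
    using summable_iff_shift[of "\<lambda>p. norm (f p)" L] summable_mult[OF c_summable, of "norm w ^ L"]
    unfolding f_shift by (simp add: norm_mult norm_power)
  ultimately have "(f has_sum w^L * suminf c) UNIV"
    by (intro norm_summable_imp_has_sum)
  then show ?thesis
    unfolding f_def hyper by simp
qed

definition neumann_term :: "complex \<Rightarrow> complex \<Rightarrow> nat \<times> nat \<times> nat \<Rightarrow> complex" where
  "neumann_term \<mu> w = (\<lambda>(L, p, q). (if L = 0 then 1 else 2)
      * (of_nat ((2*p) choose (p+L)) * bessel_term \<mu> w p)
      * (of_nat ((2*q) choose (q+L)) * bessel_term (-\<mu>) w q))"

(* Summed over L first, the absolute values collapse by has_sum_vandermonde_fold to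
   (2p+2q choose p+q) |b_mu(p)| |b_(-mu)(q)|, which a product of two exponential series
   dominates. *)
lemma neumann_term_summable: "neumann_term \<mu> w summable_on UNIV"
proof -
  obtain M1 where "M1 \<ge> 0" and M1: "\<And>p. norm (bessel_term \<mu> w p) \<le> M1 * norm w ^ p / fact p"
    using bessel_term_bound by blast
  obtain M2 where "M2 \<ge> 0" and M2: "\<And>q. norm (bessel_term (-\<mu>) w q) \<le> M2 * norm w ^ q / fact q"
    using bessel_term_bound by blast
  define e where "e n = (4 * norm w)^n / fact n" for n
  define g where "g = (\<lambda>(p,q). real ((2*p+2*q) choose (p+q))
                              * norm (bessel_term \<mu> w p) * norm (bessel_term (-\<mu>) w q))"
  have weight_norm: "norm (if L = 0 then 1 else 2 :: complex) = (if L = 0 then 1 else 2)" for L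
    by simp
  have inner: "((\<lambda>L. norm (neumann_term \<mu> w (L, pq))) has_sum g pq) UNIV" for pq
    using has_sum_vandermonde_fold[of "fst pq" "norm (bessel_term \<mu> w (fst pq))" "snd pq"
                                      "norm (bessel_term (-\<mu>) w (snd pq))"]
    by (simp add: neumann_term_def g_def case_prod_unfold norm_mult weight_norm)
  have g_nonneg: "g pq \<ge> 0" for pq
    unfolding g_def by (simp add: case_prod_unfold)
  have g_bound: "g pq \<le> (case pq of (p,q) \<Rightarrow> M1 * e p * (M2 * e q))" for pq
  proof -
    obtain p q where pq: "pq = (p,q)" by fastforce
    have "real ((2*p+2*q) choose (p+q)) \<le> 4^p * 4^q"
      using choose_double_le_four_pow[of "p+q" "p+q"] by (simp add: distrib_left power_add)
    then have "g (p,q) \<le> (4^p * 4^q) * (M1 * norm w ^ p / fact p) * (M2 * norm w ^ q / fact q)"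
      unfolding g_def prod.case using M1[of p] M2[of q] \<open>M1 \<ge> 0\<close>
      by (intro mult_mono) auto
    also have "\<dots> = M1 * e p * (M2 * e q)"
      unfolding e_def by (simp add: power_mult_distrib)
    finally show ?thesis unfolding pq by simp
  qed
  have "(\<lambda>(p,q). M1 * e p * (M2 * e q)) summable_on UNIV \<times> UNIV"
    using \<open>M1 \<ge> 0\<close> \<open>M2 \<ge> 0\<close> exp_series_summable_on[of "4 * norm w"]
    by (intro summable_on_product_nonneg summable_on_cmult_right) (auto simp: e_def)
  then have "g summable_on UNIV \<times> UNIV"
    by (rule summable_on_comparison_test) (rule g_bound, rule g_nonneg)
  then have "(\<lambda>(pq, L). norm (neumann_term \<mu> w (L, pq))) summable_on (UNIV \<times> UNIV) \<times> UNIV"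
    using inner by (intro summable_on_SigmaI[where g = g]) auto
  then have "(\<lambda>x. norm (neumann_term \<mu> w x)) summable_on UNIV"
    by (subst (asm) summable_on_swap) (simp add: case_prod_unfold)
  then show ?thesis
    by (rule abs_summable_summable)
qed

lemma neumann_term_has_sum_fixed_L:
  fixes \<mu> w :: complex
  shows "((\<lambda>pq. neumann_term \<mu> w (L, pq)) has_sum (if L = 0 then 1 else 2)
           * (fact (2*L) / fact L * w^L
              * hyper_reg [of_nat L + 1/2] [of_nat (2*L) + 1, of_nat L + \<mu> + 1] (4*w))
           * (fact (2*L) / fact L * w^L
              * hyper_reg [of_nat L + 1/2] [of_nat (2*L) + 1, of_nat L - \<mu> + 1] (4*w))) UNIV"
proof -
  define f where "f p = (if L = 0 then 1 else 2) * (of_nat ((2*p) choose (p+L)) * bessel_term \<mu> w p)"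
    for p
  define g where "g q = of_nat ((2*q) choose (q+L)) * bessel_term (-\<mu>) w q" for q
  have fg: "(\<lambda>(p,q). f p * g q) = (\<lambda>pq. neumann_term \<mu> w (L, pq))"
    by (auto simp: f_def g_def neumann_term_def fun_eq_iff mult.assoc)
  have "(\<lambda>pq. neumann_term \<mu> w (L, pq)) summable_on UNIV"
    using summable_on_SigmaD1[of "\<lambda>L pq. neumann_term \<mu> w (L, pq)" UNIV "\<lambda>_. UNIV" L]
          neumann_term_summable[of \<mu> w] by (simp add: case_prod_unfold)
  then have summable: "(\<lambda>(p,q). f p * g q) summable_on UNIV \<times> UNIV"
    unfolding fg by simp
  have f_has_sum: "(f has_sum (if L = 0 then 1 else 2)
           * (fact (2*L) / fact L * w^L
              * hyper_reg [of_nat L + 1/2] [of_nat (2*L) + 1, of_nat L + \<mu> + 1] (4*w))) UNIV"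
    unfolding f_def by (intro has_sum_cmult_right binomial_bessel_series_has_sum)
  have g_has_sum: "(g has_sum fact (2*L) / fact L * w^L
              * hyper_reg [of_nat L + 1/2] [of_nat (2*L) + 1, of_nat L - \<mu> + 1] (4*w)) UNIV"
    using binomial_bessel_series_has_sum[of L "-\<mu>" w] unfolding g_def by simp
  from has_sum_product[OF summable f_has_sum g_has_sum] show ?thesis
    unfolding fg UNIV_Times_UNIV by (simp only: mult.assoc)
qed

lemma sum_bessel_term_convolution:
  fixes a b w :: complex
  shows "(\<Sum>p\<le>N. bessel_term a w p * bessel_term b w (N-p))
         = pochhammer (of_nat N + 1 + a + b) N / fact N
           * rGamma (of_nat N + 1 + a) * rGamma (of_nat N + 1 + b) * w^N"
proof -
  have "(\<Sum>p\<le>N. bessel_term a w p * bessel_term b w (N-p))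
        = w^N * (\<Sum>p\<le>N. rGamma (of_nat p + 1 + a) * rGamma (of_nat (N-p) + 1 + b)
                            / (fact p * fact (N-p)))"
    unfolding sum_distrib_left
    by (intro sum.cong refl) (auto simp: bessel_term_def field_simps simp flip: power_add)
  then show ?thesis
    unfolding sum_rGamma_convolution by (simp add: mult_ac)
qed

lemma neumann_diagonal_sum:
  fixes \<mu> w :: complex
  shows "(\<Sum>p\<le>N. of_nat ((2*N) choose N) * bessel_term \<mu> w p * bessel_term (-\<mu>) w (N-p))
         = (\<Prod>a\<leftarrow>[1/2, 1/2]. pochhammer a N)
           * (\<Prod>b\<leftarrow>[1, 1-\<mu>, \<mu>+1]. rGamma (b + of_nat N)) * (16*w)^N / fact N"
proof -
  have convolution: "(\<Sum>p\<le>N. bessel_term \<mu> w p * bessel_term (-\<mu>) w (N-p))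
        = w^N * (pochhammer (of_nat N + 1) N / fact N
                    * rGamma (of_nat N + 1 + \<mu>) * rGamma (of_nat N + 1 + -\<mu>))"
    using sum_bessel_term_convolution[of \<mu> w "-\<mu>" N] by (simp add: mult_ac)
  have half: "pochhammer (1/2) N = fact (2*N) / (4^N * fact N :: complex)"
    using fact_double[of N, where 'a=complex] by (simp add: power_mult)
  have "fact (2*N) = (fact N * pochhammer (of_nat N + 1) N :: complex)"
    using pochhammer_product'[of "1::complex" N N, folded pochhammer_fact] by (simp add: mult_2 add.commute)
  then have upper: "pochhammer (of_nat N + 1) N = fact (2*N) / (fact N :: complex)"
    by (simp add: eq_divide_eq mult.commute)
  have central: "of_nat ((2*N) choose N) = (fact (2*N) / (fact N * fact N) :: complex)"
    using binomial_fact[of N "2*N", where 'a=complex] by (simp add: mult_2)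
  have "(\<Sum>p\<le>N. of_nat ((2*N) choose N) * bessel_term \<mu> w p * bessel_term (-\<mu>) w (N-p))
        = of_nat ((2*N) choose N) * (\<Sum>p\<le>N. bessel_term \<mu> w p * bessel_term (-\<mu>) w (N-p))"
    by (simp add: sum_distrib_left mult.assoc)
  also have "\<dots> = (fact (2*N) / (4^N * fact N))^2 * inverse (fact N)
                   * rGamma (of_nat N + 1 + -\<mu>) * rGamma (of_nat N + 1 + \<mu>) * (4^N * 4^N * w^N)
                   / fact N"
    unfolding convolution upper central by (simp add: field_simps power2_eq_square)
  also have "\<dots> = (\<Prod>a\<leftarrow>[1/2, 1/2]. pochhammer a N)
                   * (\<Prod>b\<leftarrow>[1, 1-\<mu>, \<mu>+1]. rGamma (b + of_nat N)) * (16*w)^N / fact N"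
  proof -
    have sixteen: "(16*w)^N = 4^N * 4^N * w^N"
    proof -
      have "(16::complex) = 4 * 4" by simp
      then show ?thesis by (simp only: power_mult_distrib)
    qed
    have "rGamma (1 + of_nat N :: complex) = inverse (fact N)"
      using rGamma_of_nat_plus_1[of N, where 'a=complex] by (simp add: add.commute)
    moreover have "rGamma (1 - \<mu> + of_nat N) = rGamma (of_nat N + 1 + -\<mu>)"
      and "rGamma (\<mu> + 1 + of_nat N) = rGamma (of_nat N + 1 + \<mu>)"
      by (simp_all add: algebra_simps)
    ultimately show ?thesis
      unfolding sixteen by (simp add: half power2_eq_square mult.assoc)
  qed
  finally show ?thesis .
qed

lemma neumann_term_has_sum_hyper_2F3:
  fixes \<mu> w :: complex
  shows "(neumann_term \<mu> w has_sum hyper_reg [1/2, 1/2] [1, 1-\<mu>, \<mu>+1] (16*w)) UNIV"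
proof -
  define S where "S = infsum (neumann_term \<mu> w) UNIV"
  have total: "(neumann_term \<mu> w has_sum S) (UNIV \<times> UNIV)"
    unfolding S_def UNIV_Times_UNIV by (rule has_sum_infsum[OF neumann_term_summable])
  then have "((\<lambda>(pq, L). neumann_term \<mu> w (L, pq)) has_sum S) (UNIV \<times> UNIV)"
    by (subst (asm) has_sum_swap)
  then have "((\<lambda>(p,q). of_nat ((2*p+2*q) choose (p+q))
                       * bessel_term \<mu> w p * bessel_term (-\<mu>) w q) has_sum S) UNIV"
    by (rule has_sum_SigmaD)
       (use has_sum_vandermonde_fold in \<open>auto simp: neumann_term_def case_prod_unfold\<close>)
  from has_sum_diagonal[OF this]
  have "((\<lambda>N. \<Sum>p\<le>N. of_nat ((2*N) choose N)
                      * bessel_term \<mu> w p * bessel_term (-\<mu>) w (N-p)) has_sum S) UNIV"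
    by (simp add: mult_2 cong: sum.cong_simp)
  then have "S = hyper_reg [1/2, 1/2] [1, 1-\<mu>, \<mu>+1] (16*w)"
    unfolding neumann_diagonal_sum hyper_reg_def by (intro sums_unique has_sum_imp_sums)
  with total show ?thesis
    by simp
qed

lemma neumann_coefficient_eq:
  fixes k w F1 F2 :: complex
  assumes w: "w = - (k^2) / 16"
  shows "(if L = 0 then 1 else 2) * (fact (2*L) / fact L * w^L * F1) * (fact (2*L) / fact L * w^L * F2)
         = (-1) ^ (2*L) * k ^ (4*L) * (Gamma (of_nat (2*L + 1))) ^ 2
           * (1 / 2 ^ (8*L)) * (2 - (if L = 0 then 1 else 0)) / (fact L) ^ 2 * F1 * F2"
proof -
  have "Gamma (of_nat (2*L + 1) :: complex) = fact (2*L)"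
    using Gamma_fact[of "2*L", where 'a=complex] by (simp add: add.commute)
  moreover have "w * w = k^4 / 256"
    unfolding w by (simp add: field_simps eval_nat_numeral)
  then have "w^L * w^L = (k^4)^L / 256^L"
    by (simp only: power_divide flip: power_mult_distrib)
  then have "w^L * w^L = k^(4*L) / 2^(8*L)"
    by (simp add: power_mult)
  ultimately show ?thesis
    by (simp add: field_simps power2_eq_square)
qed

theorem mainTheorem2:
  fixes k \<mu> :: complex
  shows "(\<lambda>L::nat. (-1) ^ (2*L) * k ^ (4*L) * (Gamma (of_nat (2*L + 1))) ^ 2
            * (1 / 2 ^ (8*L)) * (2 - (if L = 0 then 1 else 0)) / (fact L) ^ 2
            * hyper_reg [of_nat L + 1/2] [of_nat (2*L) + 1, of_nat L + \<mu> + 1] (- (k^2) / 4)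
            * hyper_reg [of_nat L + 1/2] [of_nat (2*L) + 1, of_nat L - \<mu> + 1] (- (k^2) / 4))
         sums hyper_reg [1/2, 1/2] [1, 1 - \<mu>, \<mu> + 1] (- (k^2))"
proof -
  define w where "w = - (k^2) / 16"
  have "4*w = - (k^2) / 4" "16*w = - (k^2)"
    unfolding w_def by simp_all
  have "(neumann_term \<mu> w has_sum hyper_reg [1/2, 1/2] [1, 1-\<mu>, \<mu>+1] (16*w)) (UNIV \<times> UNIV)"
    using neumann_term_has_sum_hyper_2F3 by simp
  from has_sum_SigmaD[OF this neumann_term_has_sum_fixed_L] show ?thesis
    unfolding neumann_coefficient_eq[OF w_def] \<open>4*w = - (k^2) / 4\<close> \<open>16*w = - (k^2)\<close>
    by (rule has_sum_imp_sums)
qed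

end
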